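(* Let $G$ be a finite abelian group of order $n$, let $S$ be the set of bijections $\{1,\dots,n\}\to G$, let $d\ge1$, and let $\pi\in S$. Then the transversals of the Latin cube $L^d(G,\pi)$ are in bijection with the solutions of \[ \pi_1+\cdots+\pi_d=\pi\qquad(\pi_1,\dots,\pi_d\in S). \] In particular, if $T(L^d(G,\pi))$ denotes the number of transversals of $L^d(G,\pi)$, then $T(L^d(G,\pi))\cdot n!$ equals the number of solutions of \[ \pi_1+\cdots+\pi_d=\pi_{d+1}\qquad(\pi_1,\dots,\pi_{d+1}\in S). \]
   Context: Sums of functions $\{1,\dots,n\}\to G$ are pointwise. A Latin cube of dimension $d$ and order $n$ is a $d$-dimensional array indexed by $\{1,\dots,n\}^d$ with entries (symbols) in $\{1,\dots,n\}$ such that no symbol occurs more than once in any axis-parallel line. A transversal is a selection of $n$ entries such that no two lie in a common axis-parallel hyperplane (i.e. share the value of some coordinate) and no two have the same symbol. $L^d(G,\pi)$ is the Latin cube whose $(i_1,\dots,i_d)$-entry is $\pi^{-1}(\pi(i_1)+\cdots+\pi(i_d))$. *)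

theory Defs
  imports "HOL-Library.FuncSet"
begin

definition cube_cells :: "nat \<Rightarrow> nat \<Rightarrow> (nat \<Rightarrow> nat) set" where
  "cube_cells d n = {1..d} \<rightarrow>\<^sub>E {1..n}"

definition is_transversal ::
  "nat \<Rightarrow> nat \<Rightarrow> ((nat \<Rightarrow> nat) \<Rightarrow> nat) \<Rightarrow> (nat \<Rightarrow> nat) set \<Rightarrow> bool" where
  "is_transversal d n L T \<longleftrightarrow> T \<subseteq> cube_cells d n \<and> card T = n \<and>
     (\<forall>x\<in>T. \<forall>y\<in>T. x \<noteq> y \<longrightarrow> (\<forall>k\<in>{1..d}. x k \<noteq> y k) \<and> L x \<noteq> L y)"

definition transversals ::
  "nat \<Rightarrow> nat \<Rightarrow> ((nat \<Rightarrow> nat) \<Rightarrow> nat) \<Rightarrow> (nat \<Rightarrow> nat) set set" where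
  "transversals d n L = {T. is_transversal d n L T}"

definition bijections_to :: "nat \<Rightarrow> (nat \<Rightarrow> 'g) set" where
  "bijections_to n = {f. bij_betw f {1..n} (UNIV :: 'g set) \<and> f \<in> extensional {1..n}}"

definition group_cube :: "nat \<Rightarrow> nat \<Rightarrow> (nat \<Rightarrow> 'g::comm_monoid_add) \<Rightarrow> (nat \<Rightarrow> nat) \<Rightarrow> nat" where
  "group_cube d n \<pi> x = inv_into {1..n} \<pi> (\<Sum>k=1..d. \<pi> (x k))"

end

theory Submission
  imports Defs "HOL-Combinatorics.Permutations"
begin

text \<open>
  A solution \<open>(\<pi>\<^sub>1, \<dots>, \<pi>\<^sub>d)\<close> of \<open>\<pi>\<^sub>1 + \<dots> + \<pi>\<^sub>d = \<pi>\<close> yields, for each symbol \<open>s\<close>, the cell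
  \<open>(\<pi>\<inverse>(\<pi>\<^sub>1 s), \<dots>, \<pi>\<inverse>(\<pi>\<^sub>d s))\<close>; its entry in \<open>L\<^sup>d(G, \<pi>)\<close> is \<open>s\<close>, and two such cells differ in every
  coordinate because each \<open>\<pi>\<^sub>k\<close> is injective, so these \<open>n\<close> cells form a transversal.
  Conversely, on a transversal the symbol and every coordinate are bijections onto \<open>{1..n}\<close>,
  so indexing its cells by their symbols recovers the \<open>\<pi>\<^sub>k\<close>.
  For the count, precomposing with the permutation \<open>\<pi>\<inverse> \<circ> \<pi>'\<close> shows that the number of
  solutions does not depend on the right-hand side \<open>\<pi>\<close>, and there are \<open>n!\<close> choices of it.
\<close>

lemma bijections_toD:
  assumes "\<sigma> \<in> bijections_to n"
  shows "bij_betw \<sigma> {1..n} UNIV" "\<sigma> \<in> extensional {1..n}"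
  using assms unfolding bijections_to_def by auto

lemma restrict_comp_in_bijections_to:
  assumes "\<sigma> \<in> bijections_to n" and "bij_betw \<tau> {1..n} {1..n}"
  shows "restrict (\<sigma> \<circ> \<tau>) {1..n} \<in> bijections_to n"
proof -
  have "bij_betw (\<sigma> \<circ> \<tau>) {1..n} UNIV"
    using assms(2) bijections_toD(1)[OF assms(1)] by (rule bij_betw_trans)
  then show ?thesis
    unfolding bijections_to_def by (simp add: bij_betw_cong[of _ "restrict _ _"])
qed

lemma finite_bijections_to: "finite (bijections_to n :: (nat \<Rightarrow> 'g::finite) set)"
proof (rule finite_subset)
  show "bijections_to n \<subseteq> {1..n} \<rightarrow>\<^sub>E (UNIV :: 'g set)"
    unfolding bijections_to_def by (auto simp: extensional_def)
qed (simp add: finite_PiE)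

lemma card_bijections_to:
  fixes \<pi> :: "nat \<Rightarrow> 'g"
  assumes \<pi>: "\<pi> \<in> bijections_to n"
  shows "card (bijections_to n :: (nat \<Rightarrow> 'g) set) = fact n"
proof -
  note \<pi>_bij = bijections_toD(1)[OF \<pi>]
  define perm_of where "perm_of \<sigma> i = (if i \<in> {1..n} then inv_into {1..n} \<pi> (\<sigma> i) else i)"
    for \<sigma> :: "nat \<Rightarrow> 'g" and i
  have "bij_betw (\<lambda>\<rho>. restrict (\<pi> \<circ> \<rho>) {1..n}) {\<rho>. \<rho> permutes {1..n}} (bijections_to n)"
  proof (rule bij_betw_byWitness[where f' = perm_of])
    show "\<forall>\<rho>\<in>{\<rho>. \<rho> permutes {1..n}}. perm_of (restrict (\<pi> \<circ> \<rho>) {1..n}) = \<rho>"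
    proof
      fix \<rho> :: "nat \<Rightarrow> nat" assume "\<rho> \<in> {\<rho>. \<rho> permutes {1..n}}"
      then have \<rho>: "\<rho> permutes {1..n}" by simp
      show "perm_of (restrict (\<pi> \<circ> \<rho>) {1..n}) = \<rho>"
        using bij_betw_inv_into_left[OF \<pi>_bij] permutes_in_image[OF \<rho>] permutes_not_in[OF \<rho>]
        by (auto simp: fun_eq_iff perm_of_def)
    qed
    show "\<forall>\<sigma>\<in>bijections_to n. restrict (\<pi> \<circ> perm_of \<sigma>) {1..n} = \<sigma>"
      using \<pi>_bij
      by (auto simp: fun_eq_iff perm_of_def bij_betw_inv_into_right bijections_to_def extensional_def)
    show "(\<lambda>\<rho>. restrict (\<pi> \<circ> \<rho>) {1..n}) ` {\<rho>. \<rho> permutes {1..n}} \<subseteq> bijections_to n"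
      using restrict_comp_in_bijections_to[OF \<pi>] permutes_imp_bij by blast
    have "perm_of \<sigma> permutes {1..n}" if "\<sigma> \<in> bijections_to n" for \<sigma>
    proof (rule bij_imp_permutes)
      have "bij_betw (inv_into {1..n} \<pi> \<circ> \<sigma>) {1..n} {1..n}"
        using bijections_toD(1)[OF that] bij_betw_inv_into[OF \<pi>_bij] by (rule bij_betw_trans)
      then show "bij_betw (perm_of \<sigma>) {1..n} {1..n}"
        by (rule bij_betw_cong[THEN iffD1, rotated]) (auto simp: perm_of_def)
    qed (auto simp: perm_of_def)
    then show "perm_of ` bijections_to n \<subseteq> {\<rho>. \<rho> permutes {1..n}}"
      by blast
  qed
  then have "card (bijections_to n :: (nat \<Rightarrow> 'g) set) = card {\<rho>. \<rho> permutes {1..n}}"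
    by (simp add: bij_betw_same_card)
  also have "\<dots> = fact n"
    by (simp add: card_permutations)
  finally show ?thesis .
qed

definition sum_solutions :: "nat \<Rightarrow> nat \<Rightarrow> (nat \<Rightarrow> 'g::comm_monoid_add) \<Rightarrow> (nat \<Rightarrow> nat \<Rightarrow> 'g) set" where
  "sum_solutions d n \<sigma> = {p \<in> {1..d} \<rightarrow>\<^sub>E bijections_to n. \<forall>i\<in>{1..n}. (\<Sum>k=1..d. p k i) = \<sigma> i}"

lemma sum_solutionsD:
  assumes "p \<in> sum_solutions d n \<sigma>"
  shows "\<And>k. k \<in> {1..d} \<Longrightarrow> p k \<in> bijections_to n" "p \<in> extensional {1..d}"
    and "\<And>i. i \<in> {1..n} \<Longrightarrow> (\<Sum>k=1..d. p k i) = \<sigma> i"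
  using assms unfolding sum_solutions_def by (auto simp: PiE_def)

lemma sum_solutions_ext:
  assumes p: "p \<in> sum_solutions d n \<sigma>" and q: "q \<in> sum_solutions d n \<sigma>'"
    and eq: "\<And>k i. k \<in> {1..d} \<Longrightarrow> i \<in> {1..n} \<Longrightarrow> p k i = q k i"
  shows "p = q"
proof -
  have "p k \<in> extensional {1..n}" "q k \<in> extensional {1..n}" if "k \<in> {1..d}" for k
    using sum_solutionsD(1)[OF p that] sum_solutionsD(1)[OF q that] by (auto dest: bijections_toD(2))
  with eq show "p = q"
    using sum_solutionsD(2)[OF p] sum_solutionsD(2)[OF q]
    by (intro ext) (metis extensional_arb)
qed

lemma finite_sum_solutions: "finite (sum_solutions d n (\<sigma> :: nat \<Rightarrow> 'g::{comm_monoid_add, finite}))"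
  by (rule finite_subset[of _ "{1..d} \<rightarrow>\<^sub>E bijections_to n"])
    (auto simp: sum_solutions_def intro: finite_PiE finite_bijections_to)

lemma precompose_in_sum_solutions:
  assumes p: "p \<in> sum_solutions d n \<sigma>" and \<tau>: "bij_betw \<tau> {1..n} {1..n}"
  shows "(\<lambda>k\<in>{1..d}. restrict (p k \<circ> \<tau>) {1..n}) \<in> sum_solutions d n (\<sigma> \<circ> \<tau>)"
proof -
  have "restrict (p k \<circ> \<tau>) {1..n} \<in> bijections_to n" if "k \<in> {1..d}" for k
    using restrict_comp_in_bijections_to[OF sum_solutionsD(1)[OF p that] \<tau>] .
  moreover have "(\<Sum>k=1..d. p k (\<tau> i)) = \<sigma> (\<tau> i)" if "i \<in> {1..n}" for i
    using sum_solutionsD(3)[OF p] that \<tau> by (auto dest: bij_betwE)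
  ultimately show ?thesis
    by (auto simp: sum_solutions_def)
qed

lemma card_sum_solutions_le:
  fixes \<sigma> \<sigma>' :: "nat \<Rightarrow> 'g::{comm_monoid_add, finite}"
  assumes \<sigma>: "\<sigma> \<in> bijections_to n" and \<sigma>': "\<sigma>' \<in> bijections_to n"
  shows "card (sum_solutions d n \<sigma>) \<le> card (sum_solutions d n \<sigma>')"
proof -
  define \<tau> where "\<tau> = inv_into {1..n} \<sigma> \<circ> \<sigma>'"
  have \<tau>_bij: "bij_betw \<tau> {1..n} {1..n}"
    unfolding \<tau>_def using bijections_toD(1)[OF \<sigma>'] bij_betw_inv_into[OF bijections_toD(1)[OF \<sigma>]]
    by (rule bij_betw_trans)
  have "\<sigma> \<circ> \<tau> = \<sigma>'"
    unfolding \<tau>_def using bijections_toD(1)[OF \<sigma>] by (simp add: fun_eq_iff bij_betw_inv_into_right)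
  define h where "h p = (\<lambda>k\<in>{1..d}. restrict (p k \<circ> \<tau>) {1..n})" for p :: "nat \<Rightarrow> nat \<Rightarrow> 'g"
  have "h ` sum_solutions d n \<sigma> \<subseteq> sum_solutions d n \<sigma>'"
    using precompose_in_sum_solutions[OF _ \<tau>_bij] \<open>\<sigma> \<circ> \<tau> = \<sigma>'\<close> by (auto simp: h_def)
  moreover have "inj_on h (sum_solutions d n \<sigma>)"
  proof (rule inj_onI)
    fix p q assume p: "p \<in> sum_solutions d n \<sigma>" and q: "q \<in> sum_solutions d n \<sigma>" and "h p = h q"
    have "p k i = q k i" if k: "k \<in> {1..d}" and i: "i \<in> {1..n}" for k i
    proof -
      obtain j where "j \<in> {1..n}" "i = \<tau> j"
        using \<tau>_bij i unfolding bij_betw_def by (metis imageE)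
      with \<open>h p = h q\<close> k show ?thesis
        by (metis (no_types, lifting) comp_apply h_def restrict_apply')
    qed
    with p q show "p = q"
      by (rule sum_solutions_ext)
  qed
  ultimately show ?thesis
    by (intro card_inj_on_le finite_sum_solutions)
qed

lemma card_sum_solutions_eq:
  fixes \<sigma> \<sigma>' :: "nat \<Rightarrow> 'g::{comm_monoid_add, finite}"
  assumes "\<sigma> \<in> bijections_to n" and "\<sigma>' \<in> bijections_to n"
  shows "card (sum_solutions d n \<sigma>) = card (sum_solutions d n \<sigma>')"
  using card_sum_solutions_le[OF assms] card_sum_solutions_le[OF assms(2,1)] by (rule antisym)

lemma bij_betw_coordinate_transversal:
  assumes "is_transversal d n L T" and "k \<in> {1..d}"
  shows "bij_betw (\<lambda>x. x k) T {1..n}"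
proof -
  have T: "T \<subseteq> {1..d} \<rightarrow>\<^sub>E {1..n}" "card T = n"
    using assms(1) unfolding is_transversal_def cube_cells_def by auto
  have "inj_on (\<lambda>x. x k) T"
    using assms unfolding is_transversal_def inj_on_def by blast
  moreover have "(\<lambda>x. x k) ` T \<subseteq> {1..n}"
    using T(1) assms(2) by (auto dest!: subsetD PiE_mem)
  ultimately show ?thesis
    using T(2) by (simp add: bij_betw_def card_image card_subset_eq)
qed

lemma bij_betw_symbol_transversal:
  assumes "is_transversal d n L T" and "L ` T \<subseteq> {1..n}"
  shows "bij_betw L T {1..n}"
proof -
  have "inj_on L T"
    using assms(1) unfolding is_transversal_def inj_on_def by blast
  with assms show ?thesis
    unfolding is_transversal_def by (simp add: bij_betw_def card_image card_subset_eq)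
qed

definition solution_cell :: "nat \<Rightarrow> nat \<Rightarrow> (nat \<Rightarrow> 'g) \<Rightarrow> (nat \<Rightarrow> nat \<Rightarrow> 'g) \<Rightarrow> nat \<Rightarrow> nat \<Rightarrow> nat" where
  "solution_cell d n \<pi> p s = (\<lambda>k\<in>{1..d}. inv_into {1..n} \<pi> (p k s))"

definition transversal_of_solution ::
    "nat \<Rightarrow> nat \<Rightarrow> (nat \<Rightarrow> 'g) \<Rightarrow> (nat \<Rightarrow> nat \<Rightarrow> 'g) \<Rightarrow> (nat \<Rightarrow> nat) set" where
  "transversal_of_solution d n \<pi> p = solution_cell d n \<pi> p ` {1..n}"

context
  fixes \<pi> :: "nat \<Rightarrow> 'g::comm_monoid_add" and d n :: nat
  assumes \<pi>: "\<pi> \<in> bijections_to n"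
begin

text \<open>The simplifier rewrites \<open>{1..n}\<close> to \<open>{Suc 0..n}\<close> (\<open>One_nat_def\<close>), so the facts below
  about \<open>inv_into {1..n} \<pi>\<close> are mostly applied with \<open>simp only\<close>.\<close>

private lemma \<pi>_inv_into_right: "\<pi> (inv_into {1..n} \<pi> y) = y"
  using bijections_toD(1)[OF \<pi>] by (simp add: bij_betw_inv_into_right)

private lemma \<pi>_inv_into_left: "s \<in> {1..n} \<Longrightarrow> inv_into {1..n} \<pi> (\<pi> s) = s"
  using bijections_toD(1)[OF \<pi>] by (simp add: bij_betw_inv_into_left)

private lemma inv_into_\<pi>_in: "inv_into {1..n} \<pi> y \<in> {1..n}"
  using bijections_toD(1)[OF \<pi>] by (metis bij_betw_def inv_into_into UNIV_I)

lemma \<pi>_solution_cell: "k \<in> {1..d} \<Longrightarrow> \<pi> (solution_cell d n \<pi> p s k) = p k s"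
  by (simp only: solution_cell_def restrict_apply' \<pi>_inv_into_right)

lemma group_cube_solution_cell:
  assumes p: "p \<in> sum_solutions d n \<pi>" and s: "s \<in> {1..n}"
  shows "group_cube d n \<pi> (solution_cell d n \<pi> p s) = s"
proof -
  have "(\<Sum>k=1..d. \<pi> (solution_cell d n \<pi> p s k)) = (\<Sum>k=1..d. p k s)"
    using \<pi>_solution_cell by (rule sum.cong[OF refl])
  also have "\<dots> = \<pi> s"
    using sum_solutionsD(3)[OF p s] .
  finally have "(\<Sum>k=1..d. \<pi> (solution_cell d n \<pi> p s k)) = \<pi> s" .
  then show ?thesis
    by (simp only: group_cube_def \<pi>_inv_into_left[OF s])
qed

lemma transversal_of_solution_in_transversals:
  assumes p: "p \<in> sum_solutions d n \<pi>"
  shows "transversal_of_solution d n \<pi> p \<in> transversals d n (group_cube d n \<pi>)"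
proof -
  let ?x = "solution_cell d n \<pi> p"
  have inj: "inj_on ?x {1..n}"
    by (rule inj_onI) (metis group_cube_solution_cell[OF p])
  have coord_ne: "?x s k \<noteq> ?x t k" if "s \<in> {1..n}" "t \<in> {1..n}" "s \<noteq> t" "k \<in> {1..d}" for s t k
  proof
    assume "?x s k = ?x t k"
    then have "p k s = p k t"
      using \<pi>_solution_cell[OF \<open>k \<in> {1..d}\<close>] by metis
    then show False
      using bijections_toD(1)[OF sum_solutionsD(1)[OF p \<open>k \<in> {1..d}\<close>]] that
      by (auto simp: bij_betw_def dest: inj_onD)
  qed
  have "?x ` {1..n} \<subseteq> cube_cells d n"
    unfolding cube_cells_def solution_cell_def
    using inv_into_\<pi>_in by (auto simp only: image_subset_iff restrict_PiE_iff)
  moreover have "card (?x ` {1..n}) = n"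
    using inj by (simp add: card_image)
  moreover have "(\<forall>k\<in>{1..d}. ?x s k \<noteq> ?x t k) \<and> group_cube d n \<pi> (?x s) \<noteq> group_cube d n \<pi> (?x t)"
    if "s \<in> {1..n}" "t \<in> {1..n}" "?x s \<noteq> ?x t" for s t
    using that coord_ne group_cube_solution_cell[OF p] by metis
  ultimately show ?thesis
    unfolding transversals_def is_transversal_def transversal_of_solution_def by blast
qed

lemma inj_on_transversal_of_solution:
  "inj_on (transversal_of_solution d n \<pi>) (sum_solutions d n \<pi>)"
proof (rule inj_onI)
  fix p q
  assume p: "p \<in> sum_solutions d n \<pi>" and q: "q \<in> sum_solutions d n \<pi>"
    and eq: "transversal_of_solution d n \<pi> p = transversal_of_solution d n \<pi> q"
  have cell_eq: "solution_cell d n \<pi> p s = solution_cell d n \<pi> q s" if s: "s \<in> {1..n}" for s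
  proof -
    obtain t where t: "t \<in> {1..n}" and st: "solution_cell d n \<pi> p s = solution_cell d n \<pi> q t"
      using eq s unfolding transversal_of_solution_def by blast
    have "s = t"
      using group_cube_solution_cell[OF p s] group_cube_solution_cell[OF q t] st by simp
    with st show ?thesis by simp
  qed
  have "p k s = q k s" if "k \<in> {1..d}" "s \<in> {1..n}" for k s
    using cell_eq[OF \<open>s \<in> {1..n}\<close>] \<pi>_solution_cell[OF \<open>k \<in> {1..d}\<close>] by metis
  with p q show "p = q"
    by (rule sum_solutions_ext)
qed

lemma transversal_in_image_transversal_of_solution:
  assumes T: "T \<in> transversals d n (group_cube d n \<pi>)"
  shows "T \<in> transversal_of_solution d n \<pi> ` sum_solutions d n \<pi>"
proof -
  let ?L = "group_cube d n \<pi>"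
  have tr: "is_transversal d n ?L T"
    using T by (simp add: transversals_def)
  have "?L ` T \<subseteq> {1..n}"
    unfolding group_cube_def using inv_into_\<pi>_in by blast
  with tr have L_bij: "bij_betw ?L T {1..n}"
    by (rule bij_betw_symbol_transversal)
  define c where "c = inv_into T ?L"
  have c_bij: "bij_betw c {1..n} T"
    unfolding c_def using L_bij by (rule bij_betw_inv_into)
  have L_c: "?L (c s) = s" if "s \<in> {1..n}" for s
    unfolding c_def using L_bij that by (rule bij_betw_inv_into_right)
  have c_cell: "c s \<in> {1..d} \<rightarrow>\<^sub>E {1..n}" if "s \<in> {1..n}" for s
    using tr bij_betwE[OF c_bij] that unfolding is_transversal_def cube_cells_def by blast
  define p where "p = (\<lambda>k\<in>{1..d}. restrict (\<pi> \<circ> ((\<lambda>x. x k) \<circ> c)) {1..n})"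
  have p: "p \<in> sum_solutions d n \<pi>"
  proof -
    have "p k \<in> bijections_to n" if k: "k \<in> {1..d}" for k
    proof -
      have "bij_betw ((\<lambda>x. x k) \<circ> c) {1..n} {1..n}"
        using c_bij bij_betw_coordinate_transversal[OF tr k] by (rule bij_betw_trans)
      with k show ?thesis
        unfolding p_def using restrict_comp_in_bijections_to[OF \<pi>] by simp
    qed
    moreover have "(\<Sum>k=1..d. p k s) = \<pi> s" if s: "s \<in> {1..n}" for s
    proof -
      have "(\<Sum>k=1..d. p k s) = (\<Sum>k=1..d. \<pi> (c s k))"
        using s by (simp add: p_def)
      also have "\<dots> = \<pi> (?L (c s))"
        by (simp only: group_cube_def \<pi>_inv_into_right)
      finally show ?thesis
        using L_c[OF s] by simp
    qed
    ultimately show ?thesis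
      unfolding sum_solutions_def p_def by auto
  qed
  have "solution_cell d n \<pi> p s = c s" if s: "s \<in> {1..n}" for s
  proof
    fix k
    show "solution_cell d n \<pi> p s k = c s k"
    proof (cases "k \<in> {1..d}")
      case True
      then have "c s k \<in> {1..n}"
        using c_cell[OF s] by blast
      with True s show ?thesis
        by (simp only: solution_cell_def p_def restrict_apply' comp_apply \<pi>_inv_into_left)
    next
      case False
      then show ?thesis
        by (simp only: solution_cell_def restrict_apply if_False PiE_arb[OF c_cell[OF s] False])
    qed
  qed
  then have "transversal_of_solution d n \<pi> p = c ` {1..n}"
    unfolding transversal_of_solution_def by (rule image_cong[OF refl])
  also have "\<dots> = T"
    using c_bij by (simp add: bij_betw_def)
  finally show ?thesis
    using p by blast
qed

lemma bij_betw_transversal_of_solution: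
  "bij_betw (transversal_of_solution d n \<pi>) (sum_solutions d n \<pi>) (transversals d n (group_cube d n \<pi>))"
  unfolding bij_betw_def
  using inj_on_transversal_of_solution transversal_of_solution_in_transversals
    transversal_in_image_transversal_of_solution by blast

end

lemma bij_betw_split_last_solution:
  "bij_betw (\<lambda>p. (p (d+1), restrict p {1..d}))
     {p \<in> {1..d+1} \<rightarrow>\<^sub>E (bijections_to n :: (nat \<Rightarrow> 'g::comm_monoid_add) set).
        \<forall>i\<in>{1..n}. (\<Sum>k=1..d. p k i) = p (d+1) i}
     (SIGMA \<sigma>:bijections_to n. sum_solutions d n \<sigma>)"
  (is "bij_betw ?split ?B ?S")
proof (rule bij_betw_byWitness[where f' = "\<lambda>(\<sigma>, q). q(d+1 := \<sigma>)"])
  have restrict_sum: "(\<Sum>k=1..d. restrict p {1..d} k i) = (\<Sum>k=1..d. p k i)"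
    and update_sum: "(\<Sum>k=1..d. (p(d+1 := \<sigma>)) k i) = (\<Sum>k=1..d. p k i)"
    for p :: "nat \<Rightarrow> nat \<Rightarrow> 'g" and \<sigma> i
    by (rule sum.cong; simp)+
  show "\<forall>p\<in>?B. (case ?split p of (\<sigma>, q) \<Rightarrow> q(d+1 := \<sigma>)) = p"
    by (auto simp: fun_eq_iff PiE_def extensional_def)
  show "\<forall>x\<in>?S. ?split (case x of (\<sigma>, q) \<Rightarrow> q(d+1 := \<sigma>)) = x"
    by (auto simp: sum_solutions_def fun_eq_iff PiE_def extensional_def)
  show "?split ` ?B \<subseteq> ?S"
    by (auto simp: sum_solutions_def restrict_sum PiE_def Pi_def)
  show "(\<lambda>(\<sigma>, q). q(d+1 := \<sigma>)) ` ?S \<subseteq> ?B"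
    by (auto simp: sum_solutions_def update_sum PiE_def Pi_def extensional_def)
qed

lemma card_split_last_solution:
  fixes \<pi> :: "nat \<Rightarrow> 'g::{comm_monoid_add, finite}"
  assumes \<pi>: "\<pi> \<in> bijections_to n"
  shows "card {p \<in> {1..d+1} \<rightarrow>\<^sub>E (bijections_to n :: (nat \<Rightarrow> 'g) set).
                 \<forall>i\<in>{1..n}. (\<Sum>k=1..d. p k i) = p (d+1) i}
       = fact n * card (sum_solutions d n \<pi>)"
proof -
  have "card {p \<in> {1..d+1} \<rightarrow>\<^sub>E (bijections_to n :: (nat \<Rightarrow> 'g) set).
                 \<forall>i\<in>{1..n}. (\<Sum>k=1..d. p k i) = p (d+1) i}
      = card (SIGMA \<sigma>:bijections_to n. sum_solutions d n (\<sigma> :: nat \<Rightarrow> 'g))"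
    by (rule bij_betw_same_card[OF bij_betw_split_last_solution])
  also have "\<dots> = (\<Sum>\<sigma>\<in>bijections_to n. card (sum_solutions d n (\<sigma> :: nat \<Rightarrow> 'g)))"
    by (simp add: finite_bijections_to finite_sum_solutions)
  also have "\<dots> = (\<Sum>\<sigma>\<in>(bijections_to n :: (nat \<Rightarrow> 'g) set). card (sum_solutions d n \<pi>))"
    using card_sum_solutions_eq[OF _ \<pi>] by (rule sum.cong[OF refl])
  also have "\<dots> = fact n * card (sum_solutions d n \<pi>)"
    using card_bijections_to[OF \<pi>] by simp
  finally show ?thesis .
qed

theorem lemma7p1:
  fixes \<pi> :: "nat \<Rightarrow> 'g::{ab_group_add, finite}"
    and n d :: nat
  assumes "n = card (UNIV :: 'g set)"
    and "d \<ge> 1"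
    and "\<pi> \<in> bijections_to n"
  shows "(\<exists>f. bij_betw f (transversals d n (group_cube d n \<pi>))
             {p \<in> {1..d} \<rightarrow>\<^sub>E bijections_to n. \<forall>i\<in>{1..n}. (\<Sum>k=1..d. p k i) = \<pi> i})
       \<and> card (transversals d n (group_cube d n \<pi>)) * fact n =
         card {p \<in> {1..d+1} \<rightarrow>\<^sub>E (bijections_to n :: (nat \<Rightarrow> 'g) set).
                 \<forall>i\<in>{1..n}. (\<Sum>k=1..d. p k i) = p (d+1) i}"
proof -
  have bij: "bij_betw (transversal_of_solution d n \<pi>) (sum_solutions d n \<pi>)
      (transversals d n (group_cube d n \<pi>))"
    using assms(3) by (rule bij_betw_transversal_of_solution)
  then have "\<exists>f. bij_betw f (transversals d n (group_cube d n \<pi>)) (sum_solutions d n \<pi>)"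
    using bij_betw_inv_into by blast
  moreover have "card (transversals d n (group_cube d n \<pi>)) = card (sum_solutions d n \<pi>)"
    using bij by (simp add: bij_betw_same_card)
  ultimately show ?thesis
    unfolding card_split_last_solution[OF assms(3)] sum_solutions_def by simp
qed

end
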